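(* Let $G$ be a connected $n$-vertex graph with maximum degree at most $3$ that is not isomorphic to any of $C_4$, $C_4'$, $K_4$. Then \[\iota(G, C_4) \leq \left\lfloor \frac{n}{5} \right\rfloor.\]
   Context: All graphs are finite and simple. For a graph $G$ and $D \subseteq V(G)$, $N[D]$ denotes the closed neighbourhood of $D$ and $G - N[D]$ the subgraph induced by $V(G)\setminus N[D]$. A set $D \subseteq V(G)$ is a $C_4$-isolating set of $G$ if $G - N[D]$ contains no subgraph isomorphic to the $4$-cycle $C_4$; $\iota(G, C_4)$ is the minimum size of such a set. $C_4'$ is the diamond graph on $\{1,2,3,4\}$ with edges $12,23,34,41,13$, and $K_4$ is the complete graph on $4$ vertices. *)

theory Defs
  imports Main
begin

definition simple_graph :: "'a set \<Rightarrow> ('a \<Rightarrow> 'a \<Rightarrow> bool) \<Rightarrow> bool" where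
  "simple_graph V E \<longleftrightarrow> finite V \<and> (\<forall>u v. E u v \<longrightarrow> E v u) \<and> (\<forall>v. \<not> E v v)
     \<and> (\<forall>u v. E u v \<longrightarrow> u \<in> V \<and> v \<in> V)"

definition degree :: "'a set \<Rightarrow> ('a \<Rightarrow> 'a \<Rightarrow> bool) \<Rightarrow> 'a \<Rightarrow> nat" where
  "degree V E v = card {u \<in> V. E v u}"

definition max_degree_le :: "'a set \<Rightarrow> ('a \<Rightarrow> 'a \<Rightarrow> bool) \<Rightarrow> nat \<Rightarrow> bool" where
  "max_degree_le V E k \<longleftrightarrow> (\<forall>v\<in>V. degree V E v \<le> k)"

definition connected_graph :: "'a set \<Rightarrow> ('a \<Rightarrow> 'a \<Rightarrow> bool) \<Rightarrow> bool" where
  "connected_graph V E \<longleftrightarrow> V \<noteq> {} \<and>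
     (\<forall>u\<in>V. \<forall>v\<in>V. (\<lambda>x y. E x y \<and> x \<in> V \<and> y \<in> V)\<^sup>*\<^sup>* u v)"

definition graph_iso :: "'a set \<Rightarrow> ('a \<Rightarrow> 'a \<Rightarrow> bool) \<Rightarrow> 'b set \<Rightarrow> ('b \<Rightarrow> 'b \<Rightarrow> bool) \<Rightarrow> bool" where
  "graph_iso V E W F \<longleftrightarrow> (\<exists>f. bij_betw f V W \<and> (\<forall>u\<in>V. \<forall>v\<in>V. E u v \<longleftrightarrow> F (f u) (f v)))"

definition C4_edges :: "nat \<Rightarrow> nat \<Rightarrow> bool" where
  "C4_edges u v \<longleftrightarrow> {u, v} \<in> {{1,2},{2,3},{3,4},{4,1}}"

definition diamond_edges :: "nat \<Rightarrow> nat \<Rightarrow> bool" where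
  "diamond_edges u v \<longleftrightarrow> {u, v} \<in> {{1,2},{2,3},{3,4},{4,1},{1,3}}"

definition K4_edges :: "nat \<Rightarrow> nat \<Rightarrow> bool" where
  "K4_edges u v \<longleftrightarrow> u \<in> {1..4} \<and> v \<in> {1..4} \<and> u \<noteq> v"

definition closed_nbhd :: "'a set \<Rightarrow> ('a \<Rightarrow> 'a \<Rightarrow> bool) \<Rightarrow> 'a set \<Rightarrow> 'a set" where
  "closed_nbhd V E D = D \<union> {v \<in> V. \<exists>d\<in>D. E d v}"

definition has_C4_subgraph :: "'a set \<Rightarrow> ('a \<Rightarrow> 'a \<Rightarrow> bool) \<Rightarrow> bool" where
  "has_C4_subgraph S E \<longleftrightarrow> (\<exists>a\<in>S. \<exists>b\<in>S. \<exists>c\<in>S. \<exists>d\<in>S. distinct [a, b, c, d] \<and>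
      E a b \<and> E b c \<and> E c d \<and> E d a)"

definition C4_isolating :: "'a set \<Rightarrow> ('a \<Rightarrow> 'a \<Rightarrow> bool) \<Rightarrow> 'a set \<Rightarrow> bool" where
  "C4_isolating V E D \<longleftrightarrow> D \<subseteq> V \<and> \<not> has_C4_subgraph (V - closed_nbhd V E D) E"

definition iota_C4 :: "'a set \<Rightarrow> ('a \<Rightarrow> 'a \<Rightarrow> bool) \<Rightarrow> nat" where
  "iota_C4 V E = (LEAST k. \<exists>D. C4_isolating V E D \<and> card D = k)"

end

(*
  The bound is proved in the stronger form 5 |D| <= n + c(G) for every graph G of maximum degree
  at most 3, where c(G) is the number of components of G that have four vertices and contain a
  4-cycle; a connected graph other than C4, the diamond and K4 has c(G) = 0.  The proof is by
  induction on the numbers of vertices and edges.  If w is a vertex and Y a vertex set such that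
  every 4-cycle meeting Y meets N[w], then w together with a C4-isolating set of G - Y isolates G,
  so G reduces to G - Y as soon as |Y| >= 5 + c(G - Y) - c(G).  Such a pair exists if G has a
  4-cycle component, or a four-vertex set containing a 4-cycle whose only outside neighbour is a
  single vertex t (take w = t and Y = t together with all such sets at t).  Otherwise an edge on
  no 4-cycle can be deleted.  If every edge lies on a 4-cycle, take a vertex w of degree 3,
  adjacent to a vertex of smaller degree if possible (without vertices of degree 3 every 4-cycle
  is a component), and let Y be N[w] together with the set T of vertices outside N[w] having two
  neighbours in N(w).  At least 6 + 4|T| arcs run inside Y, so at most 6 - |T| arcs leave Y, one
  fewer if N(w) has a vertex of degree at most 2; every 4-cycle component of G - Y receives at
  least two of them, and four if no vertex of degree 3 is adjacent to one of smaller degree.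
  Since T is nonempty and |T| = 1 forces Y to be a component, |Y| >= 5 + c(G - Y) follows.
*)
theory Submission
  imports Defs
begin

text \<open>A graph is a vertex set \<open>V\<close> with an adjacency relation \<open>E\<close> on the whole type that need not
  vanish outside \<open>V\<close>, so the subgraph induced by \<open>V - Y\<close> is simply \<open>(V - Y, E)\<close>.\<close>

definition subcubic :: "'a set \<Rightarrow> ('a \<Rightarrow> 'a \<Rightarrow> bool) \<Rightarrow> bool" where
  "subcubic V E \<longleftrightarrow> finite V \<and> (\<forall>u v. E u v \<longrightarrow> E v u) \<and> (\<forall>v. \<not> E v v) \<and> max_degree_le V E 3"

definition nbrs :: "'a set \<Rightarrow> ('a \<Rightarrow> 'a \<Rightarrow> bool) \<Rightarrow> 'a \<Rightarrow> 'a set" where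
  "nbrs V E v = {u \<in> V. E v u}"

definition arcs :: "('a \<Rightarrow> 'a \<Rightarrow> bool) \<Rightarrow> 'a set \<Rightarrow> 'a set \<Rightarrow> ('a \<times> 'a) set" where
  "arcs E A B = {(a, b). a \<in> A \<and> b \<in> B \<and> E a b}"

lemma in_nbrs_iff [simp]: "u \<in> nbrs V E v \<longleftrightarrow> u \<in> V \<and> E v u"
  by (simp add: nbrs_def)

lemma finite_nbrs [simp]: "finite V \<Longrightarrow> finite (nbrs V E x)"
  by (simp add: nbrs_def)

lemma degree_eq_card_nbrs: "degree V E v = card (nbrs V E v)"
  by (simp add: degree_def nbrs_def)

lemma in_arcs_iff [simp]: "(a, b) \<in> arcs E A B \<longleftrightarrow> a \<in> A \<and> b \<in> B \<and> E a b"
  by (simp add: arcs_def)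

lemma finite_arcs: "finite A \<Longrightarrow> finite B \<Longrightarrow> finite (arcs E A B)"
  by (rule finite_subset[of _ "A \<times> B"]) (auto simp: arcs_def)

lemma arcs_mono: "A' \<subseteq> A \<Longrightarrow> B' \<subseteq> B \<Longrightarrow> F \<le> E \<Longrightarrow> arcs F A' B' \<subseteq> arcs E A B"
  by (auto simp: arcs_def)

lemma subcubicD:
  assumes "subcubic V E"
  shows "finite V" and "E u v \<Longrightarrow> E v u" and "\<not> E v v" and "v \<in> V \<Longrightarrow> degree V E v \<le> 3"
  using assms by (auto simp: subcubic_def max_degree_le_def)

lemma degree_mono:
  assumes "finite V" "W \<subseteq> V" "F \<le> E"
  shows "degree W F v \<le> degree V E v"
  unfolding degree_def using assms by (intro card_mono) auto

lemma subcubic_mono: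
  assumes "subcubic V E" "W \<subseteq> V" "F \<le> E" "\<forall>u v. F u v \<longrightarrow> F v u"
  shows "subcubic W F"
proof -
  have "degree W F v \<le> 3" if "v \<in> W" for v
    using degree_mono[OF subcubicD(1)[OF assms(1)] assms(2,3)] subcubicD(4)[OF assms(1)] that assms(2)
    by (meson le_trans subsetD)
  moreover have "\<not> F v v" for v
    using assms(3) subcubicD(3)[OF assms(1)] by (metis predicate2D)
  ultimately show ?thesis
    using assms(2,4) finite_subset subcubicD(1)[OF assms(1)] by (auto simp: subcubic_def max_degree_le_def)
qed

lemma sum_degree_eq_card_arcs:
  assumes "finite V" "Y \<subseteq> V"
  shows "(\<Sum>y\<in>Y. degree V E y) = card (arcs E Y (V - Y)) + card (arcs E Y Y)"
proof -
  have "finite Y" using assms finite_subset by blast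
  then have "(\<Sum>y\<in>Y. degree V E y) = card (SIGMA y:Y. nbrs V E y)"
    using assms(1) by (simp add: degree_eq_card_nbrs nbrs_def)
  also have "(SIGMA y:Y. nbrs V E y) = arcs E Y (V - Y) \<union> arcs E Y Y"
    using assms(2) by (auto simp: arcs_def)
  also have "card \<dots> = card (arcs E Y (V - Y)) + card (arcs E Y Y)"
    using \<open>finite Y\<close> assms(1) by (intro card_Un_disjoint finite_arcs finite_Diff) (auto simp: arcs_def)
  finally show ?thesis .
qed

lemma card_add_card_arcs_Diff_less:
  assumes "finite V" "Y \<subseteq> V" "Y \<noteq> {}"
  shows "card (V - Y) + card (arcs E (V - Y) (V - Y)) < card V + card (arcs E V V)"
proof -
  have "card (V - Y) < card V" using assms by (intro psubset_card_mono) auto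
  moreover have "card (arcs E (V - Y) (V - Y)) \<le> card (arcs E V V)"
    using assms(1) by (intro card_mono finite_arcs arcs_mono) auto
  ultimately show ?thesis by linarith
qed

lemma nbrs_eq_of_degree_le:
  assumes "finite V" "degree V E x \<le> card A" "A \<subseteq> nbrs V E x" "finite A"
  shows "nbrs V E x = A"
proof -
  have "finite (nbrs V E x)" using assms(1) by (simp add: nbrs_def)
  then show ?thesis using assms card_seteq by (metis degree_eq_card_nbrs)
qed

lemma nbrs_eq_three:
  assumes "finite V" "degree V E x \<le> 3" "a \<in> V" "b \<in> V" "c \<in> V" "E x a" "E x b" "E x c"
    and "distinct [a, b, c]"
  shows "nbrs V E x = {a, b, c}"
  using nbrs_eq_of_degree_le[of V E x "{a, b, c}"] assms by simp

lemma nbrs_eqD: "nbrs V E x = A \<Longrightarrow> y \<in> V \<Longrightarrow> E x y \<Longrightarrow> y \<in> A"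
  by auto

lemma exists_nbr_not_in_pair:
  assumes "finite V" "degree V E x = 3"
  obtains y where "y \<in> V" "y \<noteq> a" "y \<noteq> b" "E x y"
proof -
  have "\<not> nbrs V E x \<subseteq> {a, b}"
  proof
    assume "nbrs V E x \<subseteq> {a, b}"
    then have "card (nbrs V E x) \<le> card {a, b}" by (rule card_mono[rotated]) simp
    also have "\<dots> \<le> 2" by (simp add: card_insert_if)
    finally show False using assms(2) by (simp add: degree_eq_card_nbrs)
  qed
  then obtain y where "y \<in> nbrs V E x" "y \<notin> {a, b}" by blast
  then show ?thesis using that by auto
qed

lemma sum_bounded_above_deficit:
  assumes "finite A" "\<forall>a\<in>A. f a \<le> (k::nat)" "x \<in> A" "f x < k"
  shows "sum f A + 1 \<le> k * card A"
proof -
  have "sum f A = f x + sum f (A - {x})" using assms(1,3) by (simp add: sum.remove)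
  moreover have "sum f (A - {x}) \<le> k * card (A - {x})"
    using assms(2) sum_bounded_above[of "A - {x}" f k] by (simp add: mult.commute)
  moreover have "k * card A = k * card (A - {x}) + k"
    using assms(1,3) by (metis card_Suc_Diff1 mult_Suc_right add.commute)
  ultimately show ?thesis using assms(4) by linarith
qed

lemma card_arcs_ge_card:
  assumes "finite Y" "finite S" "\<forall>x\<in>S. \<exists>y\<in>Y. E y x"
  shows "card S \<le> card (arcs E Y S)"
proof -
  have "S \<subseteq> snd ` arcs E Y S"
  proof
    fix x assume "x \<in> S"
    then obtain y where "y \<in> Y" "E y x" using assms(3) by blast
    then have "(y, x) \<in> arcs E Y S" using \<open>x \<in> S\<close> by simp
    then show "x \<in> snd ` arcs E Y S" by (rule image_eqI[rotated]) simp
  qed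
  then have "card S \<le> card (snd ` arcs E Y S)"
    using assms(1,2) by (intro card_mono) (simp_all add: finite_arcs)
  also have "\<dots> \<le> card (arcs E Y S)" using assms(1,2) by (intro card_image_le) (simp add: finite_arcs)
  finally show ?thesis .
qed

section \<open>Four-cycle components\<close>

definition four_cycle :: "'a set \<Rightarrow> ('a \<Rightarrow> 'a \<Rightarrow> bool) \<Rightarrow> 'a \<Rightarrow> 'a \<Rightarrow> 'a \<Rightarrow> 'a \<Rightarrow> bool" where
  "four_cycle S E a b c d \<longleftrightarrow>
     a \<in> S \<and> b \<in> S \<and> c \<in> S \<and> d \<in> S \<and> distinct [a, b, c, d] \<and> E a b \<and> E b c \<and> E c d \<and> E d a"

definition nbr_closed :: "'a set \<Rightarrow> ('a \<Rightarrow> 'a \<Rightarrow> bool) \<Rightarrow> 'a set \<Rightarrow> bool" where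
  "nbr_closed V E S \<longleftrightarrow> (\<forall>s\<in>S. \<forall>z\<in>V. E s z \<longrightarrow> z \<in> S)"

definition C4_component :: "'a set \<Rightarrow> ('a \<Rightarrow> 'a \<Rightarrow> bool) \<Rightarrow> 'a set \<Rightarrow> bool" where
  "C4_component V E S \<longleftrightarrow> S \<subseteq> V \<and> card S = 4 \<and> has_C4_subgraph S E \<and> nbr_closed V E S"

definition num_C4_components :: "'a set \<Rightarrow> ('a \<Rightarrow> 'a \<Rightarrow> bool) \<Rightarrow> nat" where
  "num_C4_components V E = card {S. C4_component V E S}"

lemma has_C4_subgraph_iff: "has_C4_subgraph S E \<longleftrightarrow> (\<exists>a b c d. four_cycle S E a b c d)"
  unfolding has_C4_subgraph_def four_cycle_def by blast

lemma four_cycle_mono: "four_cycle S E a b c d \<Longrightarrow> S \<subseteq> T \<Longrightarrow> four_cycle T E a b c d"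
  unfolding four_cycle_def by blast

lemma four_cycle_rotate: "four_cycle S E a b c d \<Longrightarrow> four_cycle S E b c d a"
  unfolding four_cycle_def by auto

lemma four_cycle_card: "four_cycle S E a b c d \<Longrightarrow> card {a, b, c, d} = 4"
  unfolding four_cycle_def by auto

lemma four_cycle_eq_set:
  assumes "four_cycle S E a b c d" "card S = 4"
  shows "S = {a, b, c, d}"
proof -
  have "{a, b, c, d} \<subseteq> S" using assms(1) unfolding four_cycle_def by auto
  moreover have "finite S" using assms(2) by (metis card.infinite zero_neq_numeral)
  ultimately show ?thesis using assms card_subset_eq four_cycle_card by metis
qed

lemma four_cycle_subset_nbr_closed:
  assumes "\<forall>u v. E u v \<longrightarrow> E v u" "nbr_closed V E P" "four_cycle V E a b c d" "{a, b, c, d} \<inter> P \<noteq> {}"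
  shows "{a, b, c, d} \<subseteq> P"
proof -
  have "E a b" "E b c" "E c d" "E d a" "E b a" "E c b" "E d c" "E a d" "a \<in> V" "b \<in> V" "c \<in> V" "d \<in> V"
    using assms(1,3) unfolding four_cycle_def by auto
  then have "a \<in> P \<longleftrightarrow> b \<in> P" "b \<in> P \<longleftrightarrow> c \<in> P" "c \<in> P \<longleftrightarrow> d \<in> P"
    using assms(2) unfolding nbr_closed_def by blast+
  then show ?thesis using assms(4) by blast
qed

lemma nbr_closed_subset: "nbr_closed V E S \<Longrightarrow> W \<subseteq> V \<Longrightarrow> nbr_closed W E S"
  unfolding nbr_closed_def by blast

lemma nbr_closed_Union: "\<forall>B\<in>\<B>. nbr_closed V E B \<Longrightarrow> nbr_closed V E (\<Union>\<B>)"
  unfolding nbr_closed_def by blast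

lemma nbr_closed_Diff:
  assumes "\<forall>u v. E u v \<longrightarrow> E v u" "nbr_closed V E U" "B \<subseteq> V - U" "nbr_closed (V - U) E B"
  shows "nbr_closed V E B"
  using assms unfolding nbr_closed_def by blast

lemma nbr_closed_connected:
  assumes "connected_graph V E" "S \<subseteq> V" "S \<noteq> {}" "nbr_closed V E S"
  shows "S = V"
proof -
  obtain s where "s \<in> S" using assms(3) by blast
  have "v \<in> S" if "v \<in> V" for v
  proof -
    have "(\<lambda>x y. E x y \<and> x \<in> V \<and> y \<in> V)\<^sup>*\<^sup>* s v"
      using assms(1,2) \<open>s \<in> S\<close> that unfolding connected_graph_def by blast
    then show ?thesis
    proof (induction rule: rtranclp_induct)
      case base
      show ?case by (rule \<open>s \<in> S\<close>)
    next
      case (step y z)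
      then show ?case using assms(4) unfolding nbr_closed_def by blast
    qed
  qed
  then show ?thesis using assms(2) by blast
qed

lemma C4_component_finite: "C4_component V E S \<Longrightarrow> finite S"
  unfolding C4_component_def by (metis card.infinite zero_neq_numeral)

lemma C4_component_nonempty: "C4_component V E S \<Longrightarrow> S \<noteq> {}"
  unfolding C4_component_def by (metis card.empty zero_neq_numeral)

lemma finite_C4_components: "finite V \<Longrightarrow> finite {S. C4_component V E S}"
  by (rule finite_subset[of _ "Pow V"]) (unfold C4_component_def, blast, simp)

lemma num_C4_components_eq_0_iff:
  "finite V \<Longrightarrow> num_C4_components V E = 0 \<longleftrightarrow> (\<forall>S. \<not> C4_component V E S)"
  unfolding num_C4_components_def by (simp add: finite_C4_components)

lemma C4_component_four_cycle:
  assumes "C4_component V E S"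
  obtains a b c d where "four_cycle V E a b c d" "S = {a, b, c, d}"
proof -
  have "S \<subseteq> V" "card S = 4" "has_C4_subgraph S E" using assms unfolding C4_component_def by auto
  then obtain a b c d where cyc: "four_cycle S E a b c d" unfolding has_C4_subgraph_iff by blast
  show ?thesis by (rule that[OF four_cycle_mono[OF cyc \<open>S \<subseteq> V\<close>] four_cycle_eq_set[OF cyc \<open>card S = 4\<close>]])
qed

lemma four_cycle_C4_component:
  assumes "four_cycle V E a b c d" "nbr_closed V E {a, b, c, d}"
  shows "C4_component V E {a, b, c, d}"
proof -
  have "four_cycle {a, b, c, d} E a b c d" using assms(1) unfolding four_cycle_def by simp
  moreover have "{a, b, c, d} \<subseteq> V" using assms(1) unfolding four_cycle_def by simp
  ultimately show ?thesis
    using assms(2) four_cycle_card[OF assms(1)] unfolding C4_component_def has_C4_subgraph_iff by blast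
qed

lemma four_cycle_meets_C4_component:
  assumes "\<forall>u v. E u v \<longrightarrow> E v u" "C4_component V E S" "four_cycle V E a b c d" "{a, b, c, d} \<inter> S \<noteq> {}"
  shows "{a, b, c, d} = S"
proof -
  have "nbr_closed V E S" "card S = 4" using assms(2) unfolding C4_component_def by auto
  then have "{a, b, c, d} \<subseteq> S" "card {a, b, c, d} = card S"
    using four_cycle_subset_nbr_closed[OF assms(1) _ assms(3,4)] four_cycle_card[OF assms(3)] by auto
  then show ?thesis using card_subset_eq[OF C4_component_finite[OF assms(2)]] by metis
qed

lemma C4_components_disjoint:
  assumes "\<forall>u v. E u v \<longrightarrow> E v u" "C4_component V E S" "C4_component V E S'" "S \<noteq> S'"
  shows "S \<inter> S' = {}"
proof -
  obtain a b c d where "four_cycle V E a b c d" "S' = {a, b, c, d}"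
    using assms(3) by (rule C4_component_four_cycle)
  then show ?thesis using four_cycle_meets_C4_component[OF assms(1,2)] assms(4) by blast
qed

lemma C4_components_Diff:
  assumes "\<forall>u v. E u v \<longrightarrow> E v u" "C4_component V E S"
  shows "{T. C4_component (V - S) E T} = {T. C4_component V E T} - {S}"
proof (intro set_eqI iffI)
  fix T assume "T \<in> {T. C4_component (V - S) E T}"
  then have T: "C4_component (V - S) E T" by simp
  then have "nbr_closed V E T"
    using nbr_closed_Diff assms unfolding C4_component_def by blast
  moreover have "T \<noteq> S" using T C4_component_nonempty unfolding C4_component_def by blast
  ultimately show "T \<in> {T. C4_component V E T} - {S}" using T unfolding C4_component_def by auto
next
  fix T assume "T \<in> {T. C4_component V E T} - {S}"
  then have T: "C4_component V E T" and "T \<noteq> S" by auto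
  then have "T \<inter> S = {}" using C4_components_disjoint[OF assms(1) T assms(2)] by blast
  then show "T \<in> {T. C4_component (V - S) E T}"
    using T nbr_closed_subset unfolding C4_component_def by blast
qed

lemma num_C4_components_Diff:
  assumes "finite V" "\<forall>u v. E u v \<longrightarrow> E v u" "C4_component V E S"
  shows "num_C4_components (V - S) E + 1 = num_C4_components V E"
proof -
  have "Suc (card ({T. C4_component V E T} - {S})) = card {T. C4_component V E T}"
    using finite_C4_components[OF assms(1)] assms(3) by (intro card_Suc_Diff1) auto
  then show ?thesis
    using C4_components_Diff[OF assms(2,3)] unfolding num_C4_components_def by simp
qed

lemma num_C4_components_Diff_Union:
  assumes "finite V" "\<forall>u v. E u v \<longrightarrow> E v u"
  shows "num_C4_components (V - \<Union>{B. C4_component V E B}) E = 0"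
proof -
  let ?U = "\<Union>{B. C4_component V E B}"
  have "False" if B: "C4_component (V - ?U) E B" for B
  proof -
    have "nbr_closed V E ?U" by (rule nbr_closed_Union) (simp add: C4_component_def)
    then have "C4_component V E B"
      using B nbr_closed_Diff[OF assms(2)] unfolding C4_component_def by blast
    then have "B \<subseteq> ?U" by blast
    moreover have "B \<subseteq> V - ?U" using B unfolding C4_component_def by blast
    ultimately show False using C4_component_nonempty[OF B] by blast
  qed
  then show ?thesis using num_C4_components_eq_0_iff assms(1) by blast
qed

lemma C4_component_Diff_has_arc:
  assumes "C4_component (V - Y) E S" "\<not> C4_component V E S"
  obtains s y where "s \<in> S" "y \<in> Y" "y \<in> V" "E s y"
proof -
  have "\<not> nbr_closed V E S" using assms unfolding C4_component_def by blast
  then obtain s z where "s \<in> S" "z \<in> V" "E s z" "z \<notin> S" unfolding nbr_closed_def by blast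
  moreover have "nbr_closed (V - Y) E S" using assms(1) unfolding C4_component_def by blast
  ultimately show ?thesis using that unfolding nbr_closed_def by blast
qed

lemma num_C4_components_Diff_le_card_arcs:
  assumes "finite V" "\<forall>u v. E u v \<longrightarrow> E v u" "Y \<subseteq> V"
    and "\<And>S. C4_component (V - Y) E S \<Longrightarrow> k \<le> card (arcs E Y S)"
  shows "k * num_C4_components (V - Y) E \<le> card (arcs E Y (V - Y))"
proof -
  let ?F = "{S. C4_component (V - Y) E S}"
  have fin_Y: "finite Y" using assms(1,3) finite_subset by blast
  have fin_F: "finite ?F" using assms(1) by (simp add: finite_C4_components)
  have "k * num_C4_components (V - Y) E = (\<Sum>S\<in>?F. k)" unfolding num_C4_components_def by simp
  also have "\<dots> \<le> (\<Sum>S\<in>?F. card (arcs E Y S))" using assms(4) by (intro sum_mono) simp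
  also have "\<dots> = card (\<Union>S\<in>?F. arcs E Y S)"
  proof (rule card_UN_disjoint[symmetric])
    show "finite ?F" by (rule fin_F)
    show "\<forall>S\<in>?F. finite (arcs E Y S)" using fin_Y C4_component_finite finite_arcs by blast
    show "\<forall>S\<in>?F. \<forall>S'\<in>?F. S \<noteq> S' \<longrightarrow> arcs E Y S \<inter> arcs E Y S' = {}"
      using C4_components_disjoint[OF assms(2)] unfolding arcs_def by blast
  qed
  also have "\<dots> \<le> card (arcs E Y (V - Y))"
  proof (rule card_mono)
    show "finite (arcs E Y (V - Y))" using fin_Y assms(1) by (simp add: finite_arcs)
    show "(\<Union>S\<in>?F. arcs E Y S) \<subseteq> arcs E Y (V - Y)" unfolding arcs_def C4_component_def by blast
  qed
  finally show ?thesis .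
qed

lemma K4_nbr_closed:
  assumes "subcubic V E" "four_cycle V E a b c d" "E a c" "E b d"
  shows "nbr_closed V E {a, b, c, d}"
proof -
  note fin = subcubicD(1)[OF assms(1)] and sym = subcubicD(2)[OF assms(1)]
    and deg = subcubicD(4)[OF assms(1)]
  have V: "a \<in> V" "b \<in> V" "c \<in> V" "d \<in> V" and dist: "distinct [a, b, c, d]"
    and e: "E a b" "E b c" "E c d" "E d a" using assms(2) unfolding four_cycle_def by auto
  have nbrs: "nbrs V E a = {b, c, d}" "nbrs V E b = {c, d, a}"
    "nbrs V E c = {d, a, b}" "nbrs V E d = {a, b, c}"
    using nbrs_eq_three[OF fin deg[OF V(1)] V(2,3,4) e(1) assms(3) sym[OF e(4)]]
      nbrs_eq_three[OF fin deg[OF V(2)] V(3,4,1) e(2) assms(4) sym[OF e(1)]]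
      nbrs_eq_three[OF fin deg[OF V(3)] V(4,1,2) e(3) sym[OF assms(3)] sym[OF e(2)]]
      nbrs_eq_three[OF fin deg[OF V(4)] V(1,2,3) e(4) sym[OF assms(4)] sym[OF e(3)]]
      dist by auto
  show ?thesis
    unfolding nbr_closed_def
  proof (intro ballI impI)
    fix s z assume "s \<in> {a, b, c, d}" "z \<in> V" "E s z"
    then have "z \<in> nbrs V E s" by simp
    moreover have "nbrs V E s \<subseteq> {a, b, c, d}"
      using \<open>s \<in> {a, b, c, d}\<close> nbrs by (elim insertE emptyE) simp_all
    ultimately show "z \<in> {a, b, c, d}" by (rule subsetD[rotated])
  qed
qed

lemma four_cycle_nbr_closed_if_max_degree_2:
  assumes "finite V" "\<forall>x\<in>V. degree V E x \<le> 2" "\<forall>u v. E u v \<longrightarrow> E v u" "four_cycle V E a b c d"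
  shows "nbr_closed V E {a, b, c, d}"
proof -
  have V: "a \<in> V" "b \<in> V" "c \<in> V" "d \<in> V" and dist: "distinct [a, b, c, d]"
    and e: "E a b" "E b c" "E c d" "E d a" "E b a" "E c b" "E d c" "E a d"
    using assms(3,4) unfolding four_cycle_def by auto
  have nbrs: "nbrs V E x = {y, z}" if "x \<in> V" "y \<in> V" "z \<in> V" "y \<noteq> z" "E x y" "E x z" for x y z
    using nbrs_eq_of_degree_le[OF assms(1), of E x "{y, z}"] assms(2) that by auto
  have "nbrs V E a = {b, d}" "nbrs V E b = {a, c}" "nbrs V E c = {b, d}" "nbrs V E d = {a, c}"
    using nbrs[OF V(1,2,4)] nbrs[OF V(2,1,3)] nbrs[OF V(3,2,4)] nbrs[OF V(4,1,3)] dist e by auto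
  then show ?thesis unfolding nbr_closed_def by auto
qed

lemma exists_nbr_off_four_cycle:
  assumes "finite V" "\<forall>v. \<not> E v v" "four_cycle V E a b c d" "\<not> E a c" "degree V E a = 3"
  obtains y where "y \<in> V - {a, b, c, d}" "E a y"
proof -
  obtain y where "y \<in> V" "y \<noteq> b" "y \<noteq> d" "E a y" using exists_nbr_not_in_pair[OF assms(1,5)] .
  moreover have "y \<noteq> a" "y \<noteq> c" using \<open>E a y\<close> assms(2,4) by auto
  ultimately show ?thesis using that by blast
qed

section \<open>Reductions\<close>

lemma in_closed_nbhd_singleton [simp]: "x \<in> closed_nbhd V E {w} \<longleftrightarrow> x = w \<or> x \<in> V \<and> E w x"
  by (auto simp: closed_nbhd_def)

definition guards :: "'a set \<Rightarrow> ('a \<Rightarrow> 'a \<Rightarrow> bool) \<Rightarrow> 'a \<Rightarrow> 'a set \<Rightarrow> bool" where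
  "guards V E w Y \<longleftrightarrow> (\<forall>a b c d. four_cycle V E a b c d \<longrightarrow> {a, b, c, d} \<inter> Y \<noteq> {} \<longrightarrow>
     {a, b, c, d} \<inter> closed_nbhd V E {w} \<noteq> {})"

lemma C4_isolating_insert:
  assumes "w \<in> V" "guards V E w Y" "C4_isolating (V - Y) E D"
  shows "C4_isolating V E (insert w D)"
proof -
  have nbhd_w: "closed_nbhd V E {w} \<subseteq> closed_nbhd V E (insert w D)"
    and nbhd_D: "closed_nbhd (V - Y) E D \<subseteq> closed_nbhd V E (insert w D)"
    unfolding closed_nbhd_def by blast+
  have "False" if cyc: "four_cycle (V - closed_nbhd V E (insert w D)) E a b c d" for a b c d
  proof -
    have cyc_V: "four_cycle V E a b c d" using four_cycle_mono[OF cyc Diff_subset] .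
    have avoids: "{a, b, c, d} \<inter> closed_nbhd V E (insert w D) = {}"
      using cyc unfolding four_cycle_def by auto
    show False
    proof (cases "{a, b, c, d} \<inter> Y = {}")
      case False
      then have "{a, b, c, d} \<inter> closed_nbhd V E {w} \<noteq> {}"
        using assms(2) cyc_V unfolding guards_def by blast
      then show False using avoids nbhd_w by blast
    next
      case True
      then have "{a, b, c, d} \<subseteq> (V - Y) - closed_nbhd (V - Y) E D"
        using cyc_V avoids nbhd_D unfolding four_cycle_def by auto
      then have "four_cycle ((V - Y) - closed_nbhd (V - Y) E D) E a b c d"
        using cyc_V unfolding four_cycle_def by auto
      then show False using assms(3) unfolding C4_isolating_def has_C4_subgraph_iff by blast
    qed
  qed
  moreover have "insert w D \<subseteq> V" using assms(1,3) unfolding C4_isolating_def by blast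
  ultimately show ?thesis unfolding C4_isolating_def has_C4_subgraph_iff by blast
qed

definition C4_reduction :: "'a set \<Rightarrow> ('a \<Rightarrow> 'a \<Rightarrow> bool) \<Rightarrow> 'a \<Rightarrow> 'a set \<Rightarrow> bool" where
  "C4_reduction V E w Y \<longleftrightarrow> w \<in> V \<and> Y \<subseteq> V \<and> guards V E w Y \<and>
     5 + num_C4_components (V - Y) E \<le> card Y + num_C4_components V E"

lemma C4_reduction_nonempty: "C4_reduction V E w Y \<Longrightarrow> Y \<noteq> {}"
  unfolding C4_reduction_def by (metis Diff_empty card.empty add_leD2 not_numeral_le_zero add_le_cancel_right)

lemma C4_isolating_bound_reduction:
  assumes "finite V" "C4_reduction V E w Y" "C4_isolating (V - Y) E D"
    and "5 * card D \<le> card (V - Y) + num_C4_components (V - Y) E"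
  shows "C4_isolating V E (insert w D) \<and> 5 * card (insert w D) \<le> card V + num_C4_components V E"
proof
  have "w \<in> V" "Y \<subseteq> V" "guards V E w Y"
    and count: "5 + num_C4_components (V - Y) E \<le> card Y + num_C4_components V E"
    using assms(2) unfolding C4_reduction_def by blast+
  then show "C4_isolating V E (insert w D)" using C4_isolating_insert assms(3) by metis
  have "D \<subseteq> V" using assms(3) unfolding C4_isolating_def by blast
  then have "finite D" using assms(1) by (rule finite_subset)
  then have "card (insert w D) \<le> card D + 1" by (simp add: card_insert_if)
  moreover have "card (V - Y) + card Y = card V"
    using card_Diff_subset[OF finite_subset[OF \<open>Y \<subseteq> V\<close> assms(1)] \<open>Y \<subseteq> V\<close>]
      card_mono[OF assms(1) \<open>Y \<subseteq> V\<close>] by linarith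
  ultimately show "5 * card (insert w D) \<le> card V + num_C4_components V E"
    using count assms(4) by linarith
qed

lemma C4_reduction_C4_component:
  assumes "finite V" "\<forall>u v. E u v \<longrightarrow> E v u" "C4_component V E S" "w \<in> S"
  shows "C4_reduction V E w S"
proof -
  have "guards V E w S"
    unfolding guards_def
  proof (intro allI impI)
    fix a b c d assume "four_cycle V E a b c d" "{a, b, c, d} \<inter> S \<noteq> {}"
    then have "w \<in> {a, b, c, d}" using four_cycle_meets_C4_component[OF assms(2,3)] assms(4) by blast
    then have "w \<in> {a, b, c, d} \<inter> closed_nbhd V E {w}" by simp
    then show "{a, b, c, d} \<inter> closed_nbhd V E {w} \<noteq> {}" by blast
  qed
  moreover have "S \<subseteq> V" "card S = 4" using assms(3) unfolding C4_component_def by blast+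
  moreover have "5 + num_C4_components (V - S) E \<le> card S + num_C4_components V E"
    using num_C4_components_Diff[OF assms(1-3)] \<open>card S = 4\<close> by linarith
  ultimately show ?thesis using assms(4) unfolding C4_reduction_def by blast
qed

lemma guards_hanging:
  assumes "\<forall>u v. E u v \<longrightarrow> E v u" "\<forall>S. \<not> C4_component V E S"
  shows "guards V E t (insert t (\<Union>{B. C4_component (V - {t}) E B}))"
  unfolding guards_def
proof (intro allI impI)
  fix a b c d
  assume cyc: "four_cycle V E a b c d" and meets: "{a, b, c, d} \<inter> insert t (\<Union>{B. C4_component (V - {t}) E B}) \<noteq> {}"
  show "{a, b, c, d} \<inter> closed_nbhd V E {t} \<noteq> {}"
  proof (cases "t \<in> {a, b, c, d}")
    case True
    then show ?thesis by auto
  next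
    case False
    then obtain B where B: "C4_component (V - {t}) E B" and "{a, b, c, d} \<inter> B \<noteq> {}"
      using meets by blast
    moreover have "four_cycle (V - {t}) E a b c d" using cyc False unfolding four_cycle_def by blast
    ultimately have "{a, b, c, d} = B" using four_cycle_meets_C4_component assms(1) by metis
    moreover obtain s y where "s \<in> B" "y \<in> {t}" "y \<in> V" "E s y"
      using C4_component_Diff_has_arc[OF B] assms(2) by metis
    ultimately have "s \<in> {a, b, c, d} \<inter> closed_nbhd V E {t}"
      using assms(1) B unfolding C4_component_def by auto
    then show ?thesis by blast
  qed
qed

lemma C4_reduction_hanging:
  assumes "finite V" "\<forall>u v. E u v \<longrightarrow> E v u" "\<forall>S. \<not> C4_component V E S"
    and "t \<in> V" "C4_component (V - {t}) E S"
  shows "C4_reduction V E t (insert t (\<Union>{B. C4_component (V - {t}) E B}))"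
proof -
  let ?U = "\<Union>{B. C4_component (V - {t}) E B}"
  have UV: "?U \<subseteq> V - {t}" unfolding C4_component_def by blast
  have "num_C4_components (V - insert t ?U) E = 0"
    using num_C4_components_Diff_Union[OF _ assms(2), of "V - {t}"] assms(1) by (metis Diff_insert2 finite_Diff)
  moreover have "num_C4_components V E = 0"
    using assms(1,3) num_C4_components_eq_0_iff by blast
  moreover have "5 \<le> card (insert t ?U)"
  proof -
    have "S \<subseteq> ?U" "card S = 4" using assms(5) unfolding C4_component_def by blast+
    moreover have "t \<notin> S" using \<open>S \<subseteq> ?U\<close> UV by blast
    ultimately have "card (insert t S) = 5" using C4_component_finite[OF assms(5)] by simp
    moreover have "insert t S \<subseteq> insert t ?U" using \<open>S \<subseteq> ?U\<close> by blast
    moreover have "finite (insert t ?U)" using finite_subset[OF UV] assms(1) by simp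
    ultimately show ?thesis using card_mono by metis
  qed
  ultimately show ?thesis
    using guards_hanging[OF assms(2,3)] assms(4) UV unfolding C4_reduction_def by auto
qed

section \<open>Deleting an edge that lies on no 4-cycle\<close>

definition delete_edge :: "('a \<Rightarrow> 'a \<Rightarrow> bool) \<Rightarrow> 'a \<Rightarrow> 'a \<Rightarrow> 'a \<Rightarrow> 'a \<Rightarrow> bool" where
  "delete_edge E u v = (\<lambda>x y. E x y \<and> {x, y} \<noteq> {u, v})"

definition edge_on_C4 :: "'a set \<Rightarrow> ('a \<Rightarrow> 'a \<Rightarrow> bool) \<Rightarrow> 'a \<Rightarrow> 'a \<Rightarrow> bool" where
  "edge_on_C4 V E u v \<longleftrightarrow> (\<exists>a\<in>V. \<exists>b\<in>V. distinct [u, v, a, b] \<and> E v a \<and> E a b \<and> E b u)"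

lemma delete_edge_le: "delete_edge E u v \<le> E"
  by (simp add: delete_edge_def le_fun_def)

lemma delete_edge_sym:
  "\<forall>x y. E x y \<longrightarrow> E y x \<Longrightarrow> \<forall>x y. delete_edge E u v x y \<longrightarrow> delete_edge E u v y x"
  by (simp add: delete_edge_def insert_commute)

lemma subcubic_delete_edge:
  assumes "subcubic V E"
  shows "subcubic V (delete_edge E u v)"
proof (rule subcubic_mono[OF assms order_refl delete_edge_le])
  show "\<forall>x y. delete_edge E u v x y \<longrightarrow> delete_edge E u v y x"
    using subcubicD(2)[OF assms] delete_edge_sym by metis
qed

lemma card_arcs_delete_edge_less:
  assumes "finite V" "u \<in> V" "v \<in> V" "E u v"
  shows "card (arcs (delete_edge E u v) V V) < card (arcs E V V)"
proof (rule psubset_card_mono)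
  show "finite (arcs E V V)" using assms(1) by (simp add: finite_arcs)
  have "arcs (delete_edge E u v) V V \<subseteq> arcs E V V"
    by (rule arcs_mono) (simp_all add: delete_edge_le)
  moreover have "(u, v) \<in> arcs E V V - arcs (delete_edge E u v) V V"
    using assms(2-4) by (simp add: delete_edge_def)
  ultimately show "arcs (delete_edge E u v) V V \<subset> arcs E V V" by blast
qed

lemma four_cycle_edge_on_C4: "four_cycle V E a b c d \<Longrightarrow> edge_on_C4 V E a b"
  unfolding four_cycle_def edge_on_C4_def by blast

lemma edge_on_C4_sym:
  assumes "\<forall>x y. E x y \<longrightarrow> E y x" "edge_on_C4 V E u v"
  shows "edge_on_C4 V E v u"
proof -
  obtain a b where ab: "a \<in> V" "b \<in> V" "distinct [u, v, a, b]" "E v a" "E a b" "E b u"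
    using assms(2) unfolding edge_on_C4_def by blast
  then have "distinct [v, u, b, a]" "E u b" "E b a" "E a v" using assms(1) by auto
  then show ?thesis using ab(1,2) unfolding edge_on_C4_def by blast
qed

lemma four_cycle_delete_edge:
  assumes "\<forall>x y. E x y \<longrightarrow> E y x" "\<not> edge_on_C4 V E u v" "four_cycle S E a b c d" "S \<subseteq> V"
  shows "four_cycle S (delete_edge E u v) a b c d"
proof -
  have kept: "{x, y} \<noteq> {u, v}" if "edge_on_C4 V E x y" for x y
    using that assms(2) edge_on_C4_sym[OF assms(1)] by (auto simp: doubleton_eq_iff)
  have cyc: "four_cycle V E a b c d" using four_cycle_mono[OF assms(3,4)] .
  then have "edge_on_C4 V E a b" "edge_on_C4 V E b c" "edge_on_C4 V E c d" "edge_on_C4 V E d a"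
    using four_cycle_edge_on_C4 four_cycle_rotate by metis+
  then show ?thesis using assms(3) kept unfolding four_cycle_def delete_edge_def by blast
qed

lemma C4_isolating_delete_edge:
  assumes "\<forall>x y. E x y \<longrightarrow> E y x" "\<not> edge_on_C4 V E u v" "C4_isolating V (delete_edge E u v) D"
  shows "C4_isolating V E D"
proof -
  have "False" if cyc: "four_cycle (V - closed_nbhd V E D) E a b c d" for a b c d
  proof -
    have "four_cycle (V - closed_nbhd V E D) (delete_edge E u v) a b c d"
      using four_cycle_delete_edge[OF assms(1,2) cyc] by blast
    moreover have "V - closed_nbhd V E D \<subseteq> V - closed_nbhd V (delete_edge E u v) D"
      unfolding closed_nbhd_def delete_edge_def by blast
    ultimately show False
      using assms(3) four_cycle_mono unfolding C4_isolating_def has_C4_subgraph_iff by metis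
  qed
  then show ?thesis using assms(3) unfolding C4_isolating_def has_C4_subgraph_iff by metis
qed

lemma no_C4_component_delete_edge:
  assumes "\<forall>S. \<not> C4_component V E S" "\<forall>t\<in>V. \<forall>S. \<not> C4_component (V - {t}) E S"
  shows "\<not> C4_component V (delete_edge E u v) S"
proof
  assume S: "C4_component V (delete_edge E u v) S"
  have SV: "S \<subseteq> V" "card S = 4" and closed: "nbr_closed V (delete_edge E u v) S"
    using S unfolding C4_component_def by blast+
  have C4: "has_C4_subgraph S E"
    using S unfolding C4_component_def has_C4_subgraph_def delete_edge_def by blast
  have "\<not> nbr_closed V E S" using assms(1) SV C4 unfolding C4_component_def by blast
  then obtain s z where sz: "s \<in> S" "z \<in> V" "z \<notin> S" "E s z" unfolding nbr_closed_def by blast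
  then have deleted: "{s, z} = {u, v}" using closed unfolding nbr_closed_def delete_edge_def by blast
  have "nbr_closed (V - {z}) E S"
    unfolding nbr_closed_def
  proof (intro ballI impI)
    fix s' z' assume "s' \<in> S" "z' \<in> V - {z}" "E s' z'"
    show "z' \<in> S"
    proof (rule ccontr)
      assume "z' \<notin> S"
      then have "{s', z'} = {s, z}"
        using closed \<open>s' \<in> S\<close> \<open>z' \<in> V - {z}\<close> \<open>E s' z'\<close> deleted
        unfolding nbr_closed_def delete_edge_def by blast
      then show False using \<open>z' \<in> V - {z}\<close> \<open>z' \<notin> S\<close> sz(1) by (auto simp: doubleton_eq_iff)
    qed
  qed
  then have "C4_component (V - {z}) E S" using SV C4 sz(3) unfolding C4_component_def by blast
  then show False using assms(2) sz(2) by blast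
qed

section \<open>Graphs in which every edge lies on a 4-cycle\<close>

definition degree3_closed :: "'a set \<Rightarrow> ('a \<Rightarrow> 'a \<Rightarrow> bool) \<Rightarrow> bool" where
  "degree3_closed V E \<longleftrightarrow> (\<forall>u\<in>V. \<forall>v\<in>V. E u v \<longrightarrow> degree V E u = 3 \<longrightarrow> degree V E v = 3)"

lemma degree3_closed_four_cycle:
  assumes "degree3_closed V E" "four_cycle V E a b c d" "x \<in> {a, b, c, d}" "degree V E x = 3"
  shows "\<forall>y\<in>{a, b, c, d}. degree V E y = 3"
proof -
  have "a \<in> V" "b \<in> V" "c \<in> V" "d \<in> V" "E a b" "E b c" "E c d" "E d a"
    using assms(2) unfolding four_cycle_def by auto
  then have "degree V E a = 3 \<Longrightarrow> degree V E b = 3" "degree V E b = 3 \<Longrightarrow> degree V E c = 3"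
    "degree V E c = 3 \<Longrightarrow> degree V E d = 3" "degree V E d = 3 \<Longrightarrow> degree V E a = 3"
    using assms(1) unfolding degree3_closed_def by blast+
  then show ?thesis using assms(3,4) by blast
qed

locale C4_saturated =
  fixes V :: "'a set" and E :: "'a \<Rightarrow> 'a \<Rightarrow> bool"
  assumes subcubic: "subcubic V E"
    and edge_on_C4: "u \<in> V \<Longrightarrow> v \<in> V \<Longrightarrow> E u v \<Longrightarrow> edge_on_C4 V E u v"
    and no_C4_component: "\<not> C4_component V E S"
begin

lemma finite_V: "finite V" and sym: "E u v \<Longrightarrow> E v u" and irrefl: "\<not> E v v"
  and degree_le_3: "v \<in> V \<Longrightarrow> degree V E v \<le> 3"
  using subcubicD[OF subcubic] by auto

lemma sym_all: "\<forall>u v. E u v \<longrightarrow> E v u"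
  using sym by blast

lemma adj_commute: "E u v \<longleftrightarrow> E v u"
  using sym by blast

lemma nbrs_eq:
  assumes "x \<in> V" "a \<in> V" "b \<in> V" "c \<in> V" "E x a" "E x b" "E x c" "distinct [a, b, c]"
  shows "nbrs V E x = {a, b, c}"
  using nbrs_eq_three[OF finite_V degree_le_3] assms by blast

lemma two_le_card_arcs_C4_component_Diff:
  assumes "Y \<subseteq> V" "C4_component (V - Y) E S"
  shows "2 \<le> card (arcs E Y S)"
proof -
  have closed: "\<And>x y. x \<in> S \<Longrightarrow> y \<in> V \<Longrightarrow> E x y \<Longrightarrow> y \<notin> S \<Longrightarrow> y \<in> Y"
    using assms(2) unfolding C4_component_def nbr_closed_def by blast
  obtain s z where "s \<in> S" "z \<in> Y" "z \<in> V" "E s z"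
    using C4_component_Diff_has_arc[OF assms(2) no_C4_component] by metis
  moreover have "s \<in> V" using \<open>s \<in> S\<close> assms(2) unfolding C4_component_def by blast
  ultimately have "edge_on_C4 V E z s" using edge_on_C4 sym by blast
  then obtain a b where ab: "a \<in> V" "b \<in> V" "distinct [z, s, a, b]" "E s a" "E a b" "E b z"
    unfolding edge_on_C4_def by blast
  have first: "(z, s) \<in> arcs E Y S" using \<open>s \<in> S\<close> \<open>z \<in> Y\<close> \<open>E s z\<close> adj_commute by simp
  obtain p where "p \<in> arcs E Y S" "p \<noteq> (z, s)"
  proof (cases "a \<in> S")
    case False
    then have "(a, s) \<in> arcs E Y S" using closed[OF \<open>s \<in> S\<close>] ab adj_commute \<open>s \<in> S\<close> by simp
    then show ?thesis using that ab(3) by auto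
  next
    case True
    show ?thesis
    proof (cases "b \<in> S")
      case False
      then have "(b, a) \<in> arcs E Y S" using closed[OF \<open>a \<in> S\<close>] ab adj_commute \<open>a \<in> S\<close> by simp
      then show ?thesis using that ab(3) by auto
    next
      case True
      then have "(z, b) \<in> arcs E Y S" using \<open>z \<in> Y\<close> ab adj_commute by simp
      then show ?thesis using that ab(3) by auto
    qed
  qed
  moreover have "finite (arcs E Y S)"
    using finite_subset[OF assms(1) finite_V] C4_component_finite[OF assms(2)] by (simp add: finite_arcs)
  ultimately have "card {(z, s), p} \<le> card (arcs E Y S)" using first by (intro card_mono) auto
  then show ?thesis using \<open>p \<noteq> (z, s)\<close> by simp
qed

lemma diamond_extends:
  assumes "degree3_closed V E" "four_cycle V E p q r s" "E p r" "\<not> E q s" "degree V E p = 3"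
  obtains t where "t \<in> V" "t \<notin> {p, q, r, s}" "E q t" "E t s"
proof -
  have V: "p \<in> V" "q \<in> V" "r \<in> V" "s \<in> V" and dist: "distinct [p, q, r, s]"
    and e: "E p q" "E q r" "E r s" "E s p" using assms(2) unfolding four_cycle_def by auto
  have deg_q: "degree V E q = 3" using assms(1,5) V e unfolding degree3_closed_def by blast
  have nbrs_p: "nbrs V E p = {q, r, s}"
    using nbrs_eq[OF V(1,2,3,4) e(1) assms(3) sym[OF e(4)]] dist by simp
  have nbrs_r: "nbrs V E r = {p, q, s}"
    using nbrs_eq[OF V(3,1,2,4) sym[OF assms(3)] sym[OF e(2)] e(3)] dist by simp
  obtain t where t: "t \<in> V" "t \<noteq> p" "t \<noteq> r" "E q t"
    using exists_nbr_not_in_pair[OF finite_V deg_q] by metis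
  have t_new: "t \<notin> {p, q, r, s}" using t assms(4) irrefl by auto
  have nbrs_q: "nbrs V E q = {p, r, t}"
    using nbrs_eq[OF V(2,1,3) t(1) sym[OF e(1)] e(2) t(4)] t dist by simp
  obtain a b where ab: "a \<in> V" "b \<in> V" "distinct [q, t, a, b]" "E t a" "E a b" "E b q"
    using edge_on_C4[OF V(2) t(1,4)] unfolding edge_on_C4_def by blast
  have "b \<in> {p, r}" using nbrs_eqD[OF nbrs_q ab(2) sym[OF ab(6)]] ab(3) by auto
  then have "a \<in> {q, r, s} \<or> a \<in> {p, q, s}"
    using nbrs_eqD[OF nbrs_p ab(1)] nbrs_eqD[OF nbrs_r ab(1)] sym[OF ab(5)] by blast
  moreover have "a \<noteq> r" using nbrs_eqD[OF nbrs_r t(1)] sym[OF ab(4)] t_new by auto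
  moreover have "a \<noteq> p" using nbrs_eqD[OF nbrs_p t(1)] sym[OF ab(4)] t_new by auto
  ultimately have "a = s" using ab(3) by auto
  then show ?thesis using that t(1,4) t_new ab(4) by blast
qed

lemma no_diamond:
  assumes "degree3_closed V E" "four_cycle V E p q r s" "E p r" "\<not> E q s" "degree V E p = 3"
  shows False
proof -
  obtain t where t: "t \<in> V" "t \<notin> {p, q, r, s}" "E q t" "E t s" using diamond_extends[OF assms] .
  have V: "p \<in> V" "q \<in> V" "r \<in> V" "s \<in> V" and dist: "distinct [p, q, r, s]"
    and e: "E p q" "E q r" "E r s" "E s p" using assms(2) unfolding four_cycle_def by auto
  have nbrs_p: "nbrs V E p = {q, r, s}"
    using nbrs_eq[OF V(1,2,3,4) e(1) assms(3) sym[OF e(4)]] dist by simp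
  have nbrs_r: "nbrs V E r = {p, q, s}"
    using nbrs_eq[OF V(3,1,2,4) sym[OF assms(3)] sym[OF e(2)] e(3)] dist by simp
  have nbrs_q: "nbrs V E q = {p, r, t}"
    using nbrs_eq[OF V(2,1,3) t(1) sym[OF e(1)] e(2) t(3)] t(2) dist by auto
  have nbrs_s: "nbrs V E s = {p, r, t}"
    using nbrs_eq[OF V(4,1,3) t(1) e(4) sym[OF e(3)] sym[OF t(4)]] t(2) dist by auto
  have "degree V E t = 3" using assms(1,5) V t(1,3) e(1) unfolding degree3_closed_def by metis
  then obtain z where z: "z \<in> V" "z \<noteq> q" "z \<noteq> s" "E t z"
    using exists_nbr_not_in_pair[OF finite_V] by metis
  have nbrs_t: "nbrs V E t = {q, s, z}"
    using nbrs_eq[OF t(1) V(2,4) z(1) sym[OF t(3)] t(4) z(4)] z dist by simp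
  obtain a b where ab: "a \<in> V" "b \<in> V" "distinct [t, z, a, b]" "E z a" "E a b" "E b t"
    using edge_on_C4[OF t(1) z(1,4)] unfolding edge_on_C4_def by blast
  have "b \<in> {q, s}" using nbrs_eqD[OF nbrs_t ab(2) sym[OF ab(6)]] ab(3) by auto
  then have "a \<in> {p, r}"
    using nbrs_eqD[OF nbrs_q ab(1)] nbrs_eqD[OF nbrs_s ab(1)] sym[OF ab(5)] ab(3) by auto
  then have "z \<in> {q, r, s} \<or> z \<in> {p, q, s}"
    using nbrs_eqD[OF nbrs_p z(1)] nbrs_eqD[OF nbrs_r z(1)] sym[OF ab(4)] by blast
  then have "z = r \<or> z = p" using z by auto
  then show False
    using nbrs_eqD[OF nbrs_r t(1)] nbrs_eqD[OF nbrs_p t(1)] sym[OF z(4)] t(2) by auto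
qed

lemma no_chord:
  assumes "degree3_closed V E" "four_cycle V E a b c d" "degree V E a = 3" "E a c"
  shows False
proof (cases "E b d")
  case True
  then have "C4_component V E {a, b, c, d}"
    using four_cycle_C4_component[OF assms(2) K4_nbr_closed[OF subcubic assms(2,4)]] by blast
  then show False using no_C4_component by blast
next
  case False
  show False using no_diamond[OF assms(1,2,4) False assms(3)] .
qed

lemma four_le_card_arcs_C4_component_Diff:
  assumes "degree3_closed V E" "Y \<subseteq> V" "\<forall>y\<in>Y. degree V E y = 3" "C4_component (V - Y) E S"
  shows "4 \<le> card (arcs E Y S)"
proof -
  obtain a b c d where cyc: "four_cycle (V - Y) E a b c d" and S: "S = {a, b, c, d}"
    using assms(4) by (rule C4_component_four_cycle)
  have cyc_a: "four_cycle V E a b c d" using four_cycle_mono[OF cyc Diff_subset] .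
  have closed: "nbr_closed (V - Y) E S" using assms(4) unfolding C4_component_def by blast
  have deg: "\<forall>x\<in>S. degree V E x = 3"
  proof -
    obtain s y where "s \<in> S" "y \<in> Y" "y \<in> V" "E s y"
      using C4_component_Diff_has_arc[OF assms(4) no_C4_component] by metis
    moreover have "S \<subseteq> V" using assms(4) unfolding C4_component_def by blast
    ultimately have "degree V E s = 3" using assms(1,3) sym unfolding degree3_closed_def by blast
    then show ?thesis using degree3_closed_four_cycle[OF assms(1) cyc_a] \<open>s \<in> S\<close> S by blast
  qed
  have cyc_b: "four_cycle V E b c d a" using four_cycle_rotate[OF cyc_a] .
  have cyc_c: "four_cycle V E c d a b" using four_cycle_rotate[OF cyc_b] .
  have cyc_d: "four_cycle V E d a b c" using four_cycle_rotate[OF cyc_c] .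
  have arc_into: "\<exists>y\<in>Y. E y x"
    if cyc_x: "four_cycle V E x x1 x2 x3" and S_x: "{x, x1, x2, x3} = S" for x x1 x2 x3
  proof -
    have "x \<in> S" using S_x by blast
    then have "\<not> E x x2" using no_chord[OF assms(1) cyc_x] deg by blast
    then obtain y where "y \<in> V - S" "E x y"
      using exists_nbr_off_four_cycle[OF finite_V _ cyc_x] deg \<open>x \<in> S\<close> irrefl S_x by metis
    moreover have "y \<notin> V - Y"
      using closed \<open>x \<in> S\<close> calculation unfolding nbr_closed_def by blast
    ultimately show ?thesis using sym by blast
  qed
  have "\<forall>x\<in>S. \<exists>y\<in>Y. E y x"
    using arc_into[OF cyc_a] arc_into[OF cyc_b] arc_into[OF cyc_c] arc_into[OF cyc_d] S
    by (auto simp: insert_commute)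
  then have "card S \<le> card (arcs E Y S)"
    using card_arcs_ge_card finite_subset[OF assms(2) finite_V] C4_component_finite[OF assms(4)] by blast
  then show ?thesis using assms(4) unfolding C4_component_def by simp
qed

end

locale C4_saturated_vertex = C4_saturated +
  fixes w :: 'a
  assumes w_in_V: "w \<in> V" and degree_w: "degree V E w = 3"
begin

definition N :: "'a set" where "N = nbrs V E w"

definition T :: "'a set" where "T = {c \<in> V - insert w N. 2 \<le> card (nbrs V E c \<inter> N)}"

definition Y :: "'a set" where "Y = insert w N \<union> T"

lemma in_N_iff: "x \<in> N \<longleftrightarrow> x \<in> V \<and> E w x"
  by (simp add: N_def)

lemma N_subset: "N \<subseteq> V" and w_notin_N: "w \<notin> N" and finite_N: "finite N" and card_N: "card N = 3"
  using irrefl finite_V degree_w by (auto simp: N_def degree_eq_card_nbrs)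

lemma finite_T: "finite T" and T_disjoint: "T \<inter> insert w N = {}"
  using finite_V by (auto simp: T_def)

lemma Y_subset: "Y \<subseteq> V"
  using N_subset w_in_V by (auto simp: Y_def T_def)

lemma finite_Y: "finite Y"
  using finite_subset[OF Y_subset finite_V] .

lemma card_Y: "card Y = 4 + card T"
proof -
  have "card (insert w N) = 4" using w_notin_N finite_N card_N by simp
  moreover have "card Y = card (insert w N) + card T"
    unfolding Y_def using T_disjoint finite_N finite_T by (intro card_Un_disjoint) auto
  ultimately show ?thesis by simp
qed

lemma N_eq:
  assumes "x \<in> N" "y \<in> N" "z \<in> N" "distinct [x, y, z]"
  shows "N = {x, y, z}"
proof -
  have "{x, y, z} \<subseteq> N" "card N \<le> card {x, y, z}" using assms card_N by simp_all
  then show ?thesis using card_seteq[OF finite_N] by metis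
qed

lemma in_T_if_two_nbrs_in_N:
  assumes "a \<in> V - insert w N" "x \<in> N" "b \<in> N" "x \<noteq> b" "E a x" "E a b"
  shows "a \<in> T"
proof -
  have "{x, b} \<subseteq> nbrs V E a \<inter> N" using assms N_subset by auto
  then have "card {x, b} \<le> card (nbrs V E a \<inter> N)" using finite_N by (intro card_mono) auto
  then show ?thesis using assms(1,4) unfolding T_def by simp
qed

lemma T_nbrs_meet_N:
  assumes "y \<in> T" "p \<in> V" "q \<in> V" "p \<noteq> q" "E y p" "E y q"
  shows "p \<in> N \<or> q \<in> N"
proof (rule ccontr)
  assume "\<not> (p \<in> N \<or> q \<in> N)"
  then have "card ({p, q} \<union> (nbrs V E y \<inter> N)) = card {p, q} + card (nbrs V E y \<inter> N)"
    using finite_N by (intro card_Un_disjoint) auto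
  moreover have "2 \<le> card (nbrs V E y \<inter> N)" "y \<in> V" using assms(1) unfolding T_def by auto
  moreover have "card ({p, q} \<union> (nbrs V E y \<inter> N)) \<le> degree V E y"
    unfolding degree_eq_card_nbrs using assms(2-6) finite_V by (intro card_mono) auto
  ultimately show False using degree_le_3 assms(4) by fastforce
qed

lemma four_cycle_at_Y_meets_closed_nbhd:
  assumes "four_cycle V E a b c d" "a \<in> Y"
  shows "{a, b, c, d} \<inter> closed_nbhd V E {w} \<noteq> {}"
proof (cases "a \<in> insert w N")
  case True
  then show ?thesis by (auto simp: in_N_iff)
next
  case False
  then have "a \<in> T" using assms(2) unfolding Y_def by blast
  moreover have "b \<in> V" "d \<in> V" "b \<noteq> d" "E a b" "E a d"
    using assms(1) adj_commute unfolding four_cycle_def by auto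
  ultimately have "b \<in> N \<or> d \<in> N" using T_nbrs_meet_N by blast
  then show ?thesis by (auto simp: in_N_iff)
qed

lemma guards_Y: "guards V E w Y"
  unfolding guards_def
proof (intro allI impI)
  fix a b c d assume cyc: "four_cycle V E a b c d" and "{a, b, c, d} \<inter> Y \<noteq> {}"
  then consider "a \<in> Y" | "b \<in> Y" | "c \<in> Y" | "d \<in> Y" by blast
  then show "{a, b, c, d} \<inter> closed_nbhd V E {w} \<noteq> {}"
  proof cases
    case 1
    then show ?thesis using four_cycle_at_Y_meets_closed_nbhd[OF cyc] by blast
  next
    case 2
    then show ?thesis
      using four_cycle_at_Y_meets_closed_nbhd[OF four_cycle_rotate[OF cyc]] by (simp add: insert_commute)
  next
    case 3
    then show ?thesis
      using four_cycle_at_Y_meets_closed_nbhd[OF four_cycle_rotate[OF four_cycle_rotate[OF cyc]]]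
      by (simp add: insert_commute)
  next
    case 4
    then show ?thesis
      using four_cycle_at_Y_meets_closed_nbhd[OF
          four_cycle_rotate[OF four_cycle_rotate[OF four_cycle_rotate[OF cyc]]]]
      by (simp add: insert_commute)
  qed
qed

text \<open>The arcs between \<open>w\<close> and \<open>N\<close> in both directions, and those between each vertex of \<open>T\<close>
  and its (at least two) neighbours in \<open>N\<close>, again in both directions.\<close>

lemma card_arcs_Y_ge: "6 + 4 * card T \<le> card (arcs E Y Y)"
proof -
  let ?A = "Pair w ` N" and ?B = "(\<lambda>x. (x, w)) ` N"
  let ?P = "SIGMA c:T. nbrs V E c \<inter> N"
  let ?Q = "(\<lambda>(a, b). (b, a)) ` ?P"
  have card_AB: "card ?A = 3" "card ?B = 3" using card_N by (simp_all add: card_image inj_on_def)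
  have "card ?P = (\<Sum>c\<in>T. card (nbrs V E c \<inter> N))" using finite_T finite_N by simp
  moreover have "card T * 2 \<le> (\<Sum>c\<in>T. card (nbrs V E c \<inter> N))"
    using sum_bounded_below[of T 2 "\<lambda>c. card (nbrs V E c \<inter> N)"] unfolding T_def by simp
  ultimately have card_P: "2 * card T \<le> card ?P" by simp
  have card_Q: "card ?Q = card ?P" by (rule card_image) (auto simp: inj_on_def)
  have finite: "finite ?A" "finite ?B" "finite ?P" "finite ?Q" using finite_N finite_T by auto
  have "card (?A \<union> ?B \<union> ?P \<union> ?Q) = card ?A + card ?B + card ?P + card ?Q"
  proof -
    have "?A \<inter> ?B = {}" "(?A \<union> ?B) \<inter> ?P = {}" "(?A \<union> ?B \<union> ?P) \<inter> ?Q = {}"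
      using w_notin_N T_disjoint by auto
    then show ?thesis using finite by (simp add: card_Un_disjoint)
  qed
  moreover have "?A \<union> ?B \<union> ?P \<union> ?Q \<subseteq> arcs E Y Y"
    unfolding Y_def using adj_commute by (auto simp: in_N_iff)
  then have "card (?A \<union> ?B \<union> ?P \<union> ?Q) \<le> card (arcs E Y Y)"
    using finite_Y by (intro card_mono) (simp_all add: finite_arcs)
  ultimately show ?thesis using card_AB card_P card_Q by linarith
qed

lemma N_edge_on_C4:
  assumes "x \<in> N"
  obtains a b where "a \<in> N \<union> T" "b \<in> N" "distinct [x, a, b]" "E x a" "E a b"
proof -
  have "edge_on_C4 V E w x" using edge_on_C4[OF w_in_V] assms by (simp add: in_N_iff)
  then obtain a b where ab: "a \<in> V" "b \<in> V" "distinct [w, x, a, b]" "E x a" "E a b" "E b w"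
    unfolding edge_on_C4_def by blast
  have "b \<in> N" using ab(2,6) adj_commute by (simp add: in_N_iff)
  moreover have "a \<in> N \<union> T"
  proof (cases "a \<in> N")
    case False
    then have "a \<in> V - insert w N" using ab(1,3) by auto
    then show ?thesis using in_T_if_two_nbrs_in_N[OF _ assms \<open>b \<in> N\<close>] ab(3,4,5) adj_commute by auto
  qed simp
  ultimately show ?thesis using that ab(3-5) by auto
qed

lemma T_nonempty: "T \<noteq> {}"
proof
  assume "T = {}"
  have adjacent: "E y z" if xyz: "x \<in> N" "y \<in> N" "z \<in> N" "distinct [x, y, z]" for x y z
  proof -
    obtain a b where ab: "a \<in> N" "b \<in> N" "distinct [x, a, b]" "E a b"
      using N_edge_on_C4[OF xyz(1)] \<open>T = {}\<close> by (metis Un_empty_right)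
    have "{a, b} = {y, z}" using N_eq[OF xyz] ab by auto
    then have "a = y \<and> b = z \<or> a = z \<and> b = y" by (simp add: doubleton_eq_iff)
    then show "E y z" using ab(4) sym by blast
  qed
  obtain x1 x2 x3 where N: "N = {x1, x2, x3}" and dist: "x1 \<noteq> x2" "x2 \<noteq> x3" "x1 \<noteq> x3"
    using card_N unfolding card_3_iff by blast
  then have "x1 \<in> N" "x2 \<in> N" "x3 \<in> N" by simp_all
  then have V: "x1 \<in> V" "x2 \<in> V" "x3 \<in> V" and w: "E w x1" "E w x2" "E w x3" "w \<noteq> x1" "w \<noteq> x2" "w \<noteq> x3"
    using w_notin_N unfolding in_N_iff by blast+
  have "E x1 x2" "E x2 x3" "E x1 x3"
    using adjacent[of x3 x1 x2] adjacent[of x1 x2 x3] adjacent[of x2 x1 x3] N dist by auto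
  then have cyc: "four_cycle V E w x1 x2 x3"
    using w_in_V V w dist sym[OF \<open>E w x3\<close>] unfolding four_cycle_def by simp
  have "C4_component V E {w, x1, x2, x3}"
    using four_cycle_C4_component[OF cyc K4_nbr_closed[OF subcubic cyc \<open>E w x2\<close> \<open>E x1 x3\<close>]] .
  then show False using no_C4_component by blast
qed

lemma adjacent_N_if_T_singleton:
  assumes "T = {c}" "x \<in> N"
  shows "E c x"
proof -
  obtain a b where ab: "a \<in> N \<union> T" "b \<in> N" "distinct [x, a, b]" "E x a" "E a b"
    using N_edge_on_C4[OF assms(2)] .
  show ?thesis
  proof (cases "a \<in> T")
    case True
    then show ?thesis using assms(1) ab(4) adj_commute by simp
  next
    case False
    then have "a \<in> N" using ab(1) by blast
    have c: "c \<in> V - insert w N" "2 \<le> card (nbrs V E c \<inter> N)" using assms(1) unfolding T_def by auto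
    show ?thesis
    proof (rule ccontr)
      assume "\<not> E c x"
      have "nbrs V E c \<inter> N \<subseteq> {a, b}"
        using N_eq[OF assms(2) \<open>a \<in> N\<close> ab(2,3)] \<open>\<not> E c x\<close> by auto
      moreover have "card {a, b} \<le> card (nbrs V E c \<inter> N)" using c(2) ab(3) by simp
      ultimately have "nbrs V E c \<inter> N = {a, b}" by (metis card_seteq finite.emptyI finite_insert)
      then have "E c a" by auto
      have nbrs_a: "nbrs V E a = {w, x, b}"
      proof -
        have "a \<in> V" "x \<in> V" "b \<in> V" "E a w" "E a x"
          using \<open>a \<in> N\<close> assms(2) ab(2,4) adj_commute by (auto simp: in_N_iff)
        moreover have "distinct [w, x, b]" using w_notin_N assms(2) ab(2,3) by auto
        ultimately show ?thesis using nbrs_eq[OF _ w_in_V _ _ _ _ ab(5)] by blast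
      qed
      have "c \<in> {w, x, b}" using nbrs_eqD[OF nbrs_a _ sym[OF \<open>E c a\<close>]] c(1) by blast
      then show False using c(1) assms(2) ab(2) by auto
    qed
  qed
qed

lemma no_arc_leaving_Y_if_T_singleton:
  assumes "T = {c}"
  shows "arcs E Y (V - Y) = {}"
proof -
  have c: "c \<in> V" "c \<noteq> w" "c \<notin> N" using assms unfolding T_def by auto
  have nbrs_c: "nbrs V E c = N"
  proof (rule nbrs_eq_of_degree_le[OF finite_V])
    show "degree V E c \<le> card N" using degree_le_3[OF c(1)] card_N by simp
    show "N \<subseteq> nbrs V E c" using adjacent_N_if_T_singleton[OF assms] N_subset by auto
  qed (rule finite_N)
  have Y: "Y = {w, c} \<union> N" using assms unfolding Y_def by auto
  have "False" if yz: "y \<in> Y" "z \<in> V - Y" "E y z" for y z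
  proof -
    have "y \<noteq> w" using yz Y by (auto simp: in_N_iff)
    moreover have "y \<noteq> c" using yz Y nbrs_c by auto
    ultimately have "y \<in> N" using yz(1) Y by blast
    then have y: "y \<in> V" "E y w" "E y c"
      using adjacent_N_if_T_singleton[OF assms] sym by (auto simp: in_N_iff)
    have "z \<noteq> w" "z \<noteq> c" "z \<notin> N" using yz(2) Y by auto
    then have nbrs_y: "nbrs V E y = {w, c, z}"
      using nbrs_eq[OF y(1) w_in_V c(1) _ y(2,3) yz(3)] yz(2) c(2) by auto
    obtain a b where ab: "a \<in> V" "b \<in> V" "distinct [y, z, a, b]" "E z a" "E a b" "E b y"
      using edge_on_C4[OF y(1) _ yz(3)] yz(2) unfolding edge_on_C4_def by blast
    have "b \<in> {w, c}" using nbrs_eqD[OF nbrs_y ab(2) sym[OF ab(6)]] ab(3) by auto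
    then have "a \<in> N" using nbrs_c ab(1) sym[OF ab(5)] by (auto simp: in_N_iff)
    then have "z \<in> T"
      using in_T_if_two_nbrs_in_N[OF _ \<open>y \<in> N\<close> \<open>a \<in> N\<close> _ sym[OF yz(3)] ab(4)] yz(2) ab(3)
        \<open>z \<noteq> w\<close> \<open>z \<notin> N\<close> by auto
    then show False using yz(2) unfolding Y_def by blast
  qed
  then show ?thesis unfolding arcs_def by auto
qed

lemma card_Y_ge_if_T_singleton:
  assumes "card T = 1"
  shows "5 + num_C4_components (V - Y) E \<le> card Y"
proof -
  obtain c where "T = {c}" using assms card_1_singletonE by blast
  have "\<not> C4_component (V - Y) E S" for S
  proof
    assume S: "C4_component (V - Y) E S"
    then obtain s y where "s \<in> S" "y \<in> Y" "y \<in> V" "E s y"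
      using C4_component_Diff_has_arc no_C4_component by metis
    moreover have "S \<subseteq> V - Y" using S unfolding C4_component_def by blast
    ultimately have "(y, s) \<in> arcs E Y (V - Y)" using sym by auto
    then show False using no_arc_leaving_Y_if_T_singleton[OF \<open>T = {c}\<close>] by blast
  qed
  then have "num_C4_components (V - Y) E = 0"
    using num_C4_components_eq_0_iff finite_V by blast
  then show ?thesis using card_Y assms by simp
qed

lemma num_C4_components_Diff_Y_bound:
  assumes "\<And>S. C4_component (V - Y) E S \<Longrightarrow> k \<le> card (arcs E Y S)"
    and "(\<Sum>y\<in>Y. degree V E y) + slack \<le> 3 * card Y"
  shows "k * num_C4_components (V - Y) E + card T + slack \<le> 6"
proof -
  have "k * num_C4_components (V - Y) E \<le> card (arcs E Y (V - Y))"
    using num_C4_components_Diff_le_card_arcs[OF finite_V sym_all Y_subset assms(1)] .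
  moreover have "(\<Sum>y\<in>Y. degree V E y) = card (arcs E Y (V - Y)) + card (arcs E Y Y)"
    by (rule sum_degree_eq_card_arcs[OF finite_V Y_subset])
  ultimately show ?thesis using card_arcs_Y_ge card_Y assms(2) by linarith
qed

lemma degree_Y_if_degree3_closed:
  assumes "degree3_closed V E" "y \<in> Y"
  shows "degree V E y = 3"
proof -
  have deg_N: "degree V E x = 3" if "x \<in> N" for x
    using assms(1) w_in_V degree_w that unfolding degree3_closed_def in_N_iff by blast
  have "degree V E y = 3" if "y \<in> T"
  proof -
    have "y \<in> V" "nbrs V E y \<inter> N \<noteq> {}" using that unfolding T_def by auto
    then obtain x where "x \<in> N" "E y x" by auto
    then show ?thesis
      using assms(1) deg_N \<open>y \<in> V\<close> N_subset sym unfolding degree3_closed_def by blast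
  qed
  then show ?thesis using assms(2) deg_N degree_w unfolding Y_def by blast
qed

lemma C4_reduction_at_w:
  assumes "(\<exists>x\<in>N. degree V E x \<le> 2) \<or> degree3_closed V E"
  shows "C4_reduction V E w Y"
proof -
  have "5 + num_C4_components (V - Y) E \<le> card Y"
  proof (cases "card T = 1")
    case True
    then show ?thesis by (rule card_Y_ge_if_T_singleton)
  next
    case False
    moreover have "card T \<noteq> 0" using T_nonempty finite_T by simp
    ultimately have "2 \<le> card T" by linarith
    from assms show ?thesis
    proof
      assume "\<exists>x\<in>N. degree V E x \<le> 2"
      then obtain x where "x \<in> Y" "degree V E x < 3" unfolding Y_def by force
      then have "(\<Sum>y\<in>Y. degree V E y) + 1 \<le> 3 * card Y"
        using sum_bounded_above_deficit[OF finite_Y] degree_le_3 Y_subset by blast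
      then have "2 * num_C4_components (V - Y) E + card T + 1 \<le> 6"
        using num_C4_components_Diff_Y_bound two_le_card_arcs_C4_component_Diff[OF Y_subset] by blast
      then show ?thesis using card_Y \<open>2 \<le> card T\<close> by presburger
    next
      assume closed: "degree3_closed V E"
      then have "\<forall>y\<in>Y. degree V E y = 3" using degree_Y_if_degree3_closed by blast
      then have "(\<Sum>y\<in>Y. degree V E y) + 0 \<le> 3 * card Y" by simp
      then have "4 * num_C4_components (V - Y) E + card T + 0 \<le> 6"
        using num_C4_components_Diff_Y_bound four_le_card_arcs_C4_component_Diff[OF closed Y_subset] \<open>\<forall>y\<in>Y. _\<close>
        by blast
      then show ?thesis using card_Y \<open>2 \<le> card T\<close> by presburger
    qed
  qed
  moreover have "num_C4_components V E = 0"
    using num_C4_components_eq_0_iff finite_V no_C4_component by blast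
  ultimately show ?thesis using w_in_V Y_subset guards_Y unfolding C4_reduction_def by simp
qed

end

lemma (in C4_saturated) C4_reduction_exists:
  assumes "has_C4_subgraph V E"
  shows "\<exists>w Y. C4_reduction V E w Y"
proof (cases "\<exists>u\<in>V. \<exists>v\<in>V. E u v \<and> degree V E u = 3 \<and> degree V E v \<le> 2")
  case True
  then obtain u v where uv: "u \<in> V" "v \<in> V" "E u v" "degree V E u = 3" "degree V E v \<le> 2" by blast
  interpret C4_saturated_vertex V E u
    by (intro C4_saturated_vertex.intro C4_saturated_axioms C4_saturated_vertex_axioms.intro uv)
  have "\<exists>x\<in>N. degree V E x \<le> 2" using uv by (auto simp: in_N_iff)
  then show ?thesis using C4_reduction_at_w by blast
next
  case no_drop: False
  show ?thesis
  proof (cases "\<exists>w\<in>V. degree V E w = 3")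
    case True
    then obtain w where w: "w \<in> V" "degree V E w = 3" by blast
    interpret C4_saturated_vertex V E w
      by (intro C4_saturated_vertex.intro C4_saturated_axioms C4_saturated_vertex_axioms.intro w)
    have "degree3_closed V E"
      unfolding degree3_closed_def
    proof (intro ballI impI)
      fix u v assume "u \<in> V" "v \<in> V" "E u v" "degree V E u = 3"
      then show "degree V E v = 3" using no_drop degree_le_3[OF \<open>v \<in> V\<close>] by fastforce
    qed
    then show ?thesis using C4_reduction_at_w by blast
  next
    case False
    then have "\<forall>x\<in>V. degree V E x \<le> 2" using degree_le_3 by fastforce
    moreover obtain a b c d where cyc: "four_cycle V E a b c d"
      using assms unfolding has_C4_subgraph_iff by blast
    ultimately have "C4_component V E {a, b, c, d}"
      using four_cycle_C4_component[OF cyc four_cycle_nbr_closed_if_max_degree_2[OF finite_V _ sym_all cyc]]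
      by blast
    then show ?thesis using no_C4_component by blast
  qed
qed

lemma C4_reduction_or_removable_edge:
  assumes "subcubic V E" "has_C4_subgraph V E"
  shows "(\<exists>w Y. C4_reduction V E w Y) \<or>
    (\<exists>u\<in>V. \<exists>v\<in>V. E u v \<and> \<not> edge_on_C4 V E u v \<and>
       num_C4_components V (delete_edge E u v) \<le> num_C4_components V E)"
proof -
  note finite = subcubicD(1)[OF assms(1)]
  have sym: "\<forall>u v. E u v \<longrightarrow> E v u" using subcubicD(2)[OF assms(1)] by blast
  show ?thesis
  proof (cases "\<exists>S. C4_component V E S")
    case True
    then obtain S w where "C4_component V E S" "w \<in> S" using C4_component_nonempty by blast
    then have "C4_reduction V E w S" by (rule C4_reduction_C4_component[OF finite sym])
    then show ?thesis by blast
  next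
    case False
    then have no_component: "\<forall>S. \<not> C4_component V E S" by blast
    show ?thesis
    proof (cases "\<exists>t\<in>V. \<exists>S. C4_component (V - {t}) E S")
      case True
      then obtain t S where "t \<in> V" "C4_component (V - {t}) E S" by blast
      then have "C4_reduction V E t (insert t (\<Union>{B. C4_component (V - {t}) E B}))"
        by (rule C4_reduction_hanging[OF finite sym no_component])
      then show ?thesis by blast
    next
      case False
      then have no_hanging: "\<forall>t\<in>V. \<forall>S. \<not> C4_component (V - {t}) E S" by blast
      show ?thesis
      proof (cases "\<forall>u\<in>V. \<forall>v\<in>V. E u v \<longrightarrow> edge_on_C4 V E u v")
        case True
        then interpret C4_saturated V E
          by (intro C4_saturated.intro) (use assms(1) no_component in blast)+
        show ?thesis using C4_reduction_exists[OF assms(2)] by blast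
      next
        case False
        then obtain u v where "u \<in> V" "v \<in> V" "E u v" "\<not> edge_on_C4 V E u v" by blast
        moreover have "num_C4_components V (delete_edge E u v) = 0"
          using no_C4_component_delete_edge[OF no_component no_hanging] num_C4_components_eq_0_iff[OF finite]
          by blast
        ultimately show ?thesis by (intro disjI2 bexI[of _ u] bexI[of _ v]) simp_all
      qed
    qed
  qed
qed

theorem C4_isolating_bound:
  assumes "subcubic V E"
  shows "\<exists>D. C4_isolating V E D \<and> 5 * card D \<le> card V + num_C4_components V E"
  using assms
proof (induction "card V + card (arcs E V V)" arbitrary: V E rule: less_induct)
  case less
  note finite = subcubicD(1)[OF less.prems]
  have sym: "\<forall>u v. E u v \<longrightarrow> E v u" using subcubicD(2)[OF less.prems] by blast
  show ?case
  proof (cases "has_C4_subgraph V E")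
    case False
    then have "C4_isolating V E {}" unfolding C4_isolating_def closed_nbhd_def by simp
    then show ?thesis by (intro exI[of _ "{}"]) simp
  next
    case True
    then consider (reduction) w Y where "C4_reduction V E w Y"
      | (removable) u v where "u \<in> V" "v \<in> V" "E u v" "\<not> edge_on_C4 V E u v"
          "num_C4_components V (delete_edge E u v) \<le> num_C4_components V E"
      using C4_reduction_or_removable_edge[OF less.prems] by blast
    then show ?thesis
    proof cases
      case reduction
      then have "Y \<subseteq> V" "Y \<noteq> {}"
        using C4_reduction_nonempty[OF reduction] unfolding C4_reduction_def by blast+
      from less.hyps[OF card_add_card_arcs_Diff_less[OF finite this]
          subcubic_mono[OF less.prems Diff_subset order_refl sym]]
      obtain D where "C4_isolating (V - Y) E D"
        "5 * card D \<le> card (V - Y) + num_C4_components (V - Y) E" by blast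
      then show ?thesis using C4_isolating_bound_reduction[OF finite reduction] by blast
    next
      case removable
      then have "card V + card (arcs (delete_edge E u v) V V) < card V + card (arcs E V V)"
        using card_arcs_delete_edge_less[OF finite] by simp
      from less.hyps[OF this subcubic_delete_edge[OF less.prems]]
      obtain D where "C4_isolating V (delete_edge E u v) D"
        "5 * card D \<le> card V + num_C4_components V (delete_edge E u v)" by blast
      moreover have "C4_isolating V E D" using C4_isolating_delete_edge[OF sym removable(4)] calculation(1) .
      ultimately show ?thesis using removable(5) by (metis add_le_mono le_trans order_refl)
    qed
  qed
qed

lemma graph_iso_four_labelled:
  assumes "distinct [a, b, c, d]" "V = {a, b, c, d}"
    and "\<And>u v. u \<in> V \<Longrightarrow> v \<in> V \<Longrightarrow> E u v \<longleftrightarrow> F (label u) (label v)"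
    and "label = (\<lambda>x. if x = a then 1 else if x = b then 2 else if x = c then 3 else 4::nat)"
  shows "graph_iso V E {1..4} F"
proof -
  have "bij_betw label V {1..4}"
    unfolding bij_betw_def inj_on_def assms(2,4) using assms(1) by (auto simp: atLeastAtMost_iff)
  then show ?thesis unfolding graph_iso_def using assms(3) by blast
qed

lemma C4_edges_iff: "C4_edges i j \<longleftrightarrow> (i, j) \<in> {(1,2), (2,1), (2,3), (3,2), (3,4), (4,3), (4,1), (1,4)}"
  unfolding C4_edges_def by (auto simp: doubleton_eq_iff)

lemma diamond_edges_iff:
  "diamond_edges i j \<longleftrightarrow> (i, j) \<in> {(1,2), (2,1), (2,3), (3,2), (3,4), (4,3), (4,1), (1,4), (1,3), (3,1)}"
  unfolding diamond_edges_def by (auto simp: doubleton_eq_iff)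

lemma four_cycle_graph_iso:
  assumes "four_cycle V E a b c d" "V = {a, b, c, d}" "\<forall>u v. E u v \<longrightarrow> E v u" "\<forall>v. \<not> E v v"
  shows "graph_iso V E {1..4} C4_edges \<or> graph_iso V E {1..4} diamond_edges \<or> graph_iso V E {1..4} K4_edges"
proof -
  have dist: "distinct [a, b, c, d]" and e: "E a b" "E b c" "E c d" "E d a"
    using assms(1) unfolding four_cycle_def by auto
  have adj: "E u v \<longleftrightarrow> E v u" for u v using assms(3) by blast
  have irr: "\<not> E a a" "\<not> E b b" "\<not> E c c" "\<not> E d d" using assms(4) by auto
  consider (C4) "\<not> E a c" "\<not> E b d" | (diamond_ac) "E a c" "\<not> E b d" | (diamond_bd) "\<not> E a c" "E b d"
    | (K4) "E a c" "E b d" by blast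
  then show ?thesis
  proof cases
    case C4
    have "graph_iso V E {1..4} C4_edges"
      by (intro graph_iso_four_labelled[OF dist assms(2) _ refl])
        (use dist e irr C4 adj in \<open>auto simp: assms(2) C4_edges_iff\<close>)
    then show ?thesis by blast
  next
    case diamond_ac
    have "graph_iso V E {1..4} diamond_edges"
      by (intro graph_iso_four_labelled[OF dist assms(2) _ refl])
        (use dist e irr diamond_ac adj in \<open>auto simp: assms(2) diamond_edges_iff\<close>)
    then show ?thesis by blast
  next
    case diamond_bd
    have "distinct [b, c, d, a]" "V = {b, c, d, a}" using dist assms(2) by auto
    then have "graph_iso V E {1..4} diamond_edges"
      by (intro graph_iso_four_labelled[of b c d a V, OF _ _ _ refl])
        (use dist e irr diamond_bd adj in \<open>auto simp: assms(2) diamond_edges_iff\<close>)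
    then show ?thesis by blast
  next
    case K4
    have "graph_iso V E {1..4} K4_edges"
      by (intro graph_iso_four_labelled[OF dist assms(2) _ refl])
        (use dist e irr K4 adj in \<open>auto simp: assms(2) K4_edges_def\<close>)
    then show ?thesis by blast
  qed
qed

lemma num_C4_components_connected:
  assumes "simple_graph V E" "connected_graph V E"
    and "\<not> graph_iso V E {1..4::nat} C4_edges"
    and "\<not> graph_iso V E {1..4::nat} diamond_edges"
    and "\<not> graph_iso V E {1..4::nat} K4_edges"
  shows "num_C4_components V E = 0"
proof -
  have "\<not> C4_component V E S" for S
  proof
    assume S: "C4_component V E S"
    then have "S = V"
      using nbr_closed_connected[OF assms(2)] C4_component_nonempty unfolding C4_component_def by blast
    moreover obtain a b c d where "four_cycle V E a b c d" "S = {a, b, c, d}"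
      using S by (rule C4_component_four_cycle)
    ultimately show False
      using four_cycle_graph_iso assms(1,3-5) unfolding simple_graph_def by metis
  qed
  then show ?thesis using num_C4_components_eq_0_iff assms(1) unfolding simple_graph_def by blast
qed

theorem theorem3:
  fixes V :: "'a set" and E :: "'a \<Rightarrow> 'a \<Rightarrow> bool"
  assumes "simple_graph V E"
    and "connected_graph V E"
    and "max_degree_le V E 3"
    and "\<not> graph_iso V E {1..4::nat} C4_edges"
    and "\<not> graph_iso V E {1..4::nat} diamond_edges"
    and "\<not> graph_iso V E {1..4::nat} K4_edges"
  shows "iota_C4 V E \<le> card V div 5"
proof -
  have "subcubic V E" using assms(1,3) unfolding subcubic_def simple_graph_def by blast
  then obtain D where D: "C4_isolating V E D" "5 * card D \<le> card V + num_C4_components V E"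
    using C4_isolating_bound by blast
  have "iota_C4 V E \<le> card D" unfolding iota_C4_def by (rule Least_le) (use D(1) in blast)
  moreover have "num_C4_components V E = 0" using num_C4_components_connected assms by blast
  ultimately show ?thesis using D(2) by simp
qed

end
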